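(* Let $X$ be a space and let $n \ge 0$. Then for every $\gamma \in \pi_0(L^n X)$ there is a unique pair consisting of \begin{itemize} \item an order-preserving injection $\iota\colon [k] \hookrightarrow [n]$, and \item a new element $\gamma' \in \pi_0(L^k X)$, \end{itemize} such that $\gamma$ is the image of $\gamma'$ under the map $\pi_0(L^kX)\to\pi_0(L^nX)$ induced by the standard projection associated with $\iota$.
   Context: For $n\ge 0$ write $[n]=\{1,\dots,n\}$, $\mathbb{T}^n=(S^1)^n$, and $L^nX = \mathrm{Map}(\mathbb{T}^n, X)$; thus $L^1 X= LX$ is the free loop space and $L^0X=X$. An order-preserving injection $\iota\colon [k] \hookrightarrow [n]$ induces the standard projection $\mathbb{T}^n \to \mathbb{T}^k$, which is the projection onto the coordinates in the image of $\iota$. By precomposition, this projection induces a map $L^kX \to L^nX$. An element of $\pi_0(L^nX)$ is called old if it lies in the image of $\pi_0(L^kX)\to\pi_0(L^nX)$ for some standard projection with $k<n$. Otherwise it is called new. *)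

theory Defs
  imports "HOL-Analysis.Analysis"
begin

definition circle :: "complex topology" where
  "circle = subtopology euclidean (sphere 0 1)"

definition torus :: "nat \<Rightarrow> (nat \<Rightarrow> complex) topology" where
  "torus n = product_topology (\<lambda>i. circle) {1..n}"

definition ord_inj :: "nat \<Rightarrow> nat \<Rightarrow> (nat \<Rightarrow> nat) \<Rightarrow> bool" where
  "ord_inj k n \<iota> \<longleftrightarrow> \<iota> \<in> {1..k} \<rightarrow>\<^sub>E {1..n} \<and> strict_mono_on {1..k} \<iota>"

definition std_proj :: "nat \<Rightarrow> (nat \<Rightarrow> nat) \<Rightarrow> (nat \<Rightarrow> complex) \<Rightarrow> (nat \<Rightarrow> complex)" where
  "std_proj k \<iota> t = restrict (\<lambda>j. t (\<iota> j)) {1..k}"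

text \<open>pi_0(L^n X): path components of Map(T^n,X), i.e. homotopy classes of continuous
  maps T^n \<rightarrow> X (via the exponential law, T^n being compact Hausdorff).\<close>
definition hclass :: "'a topology \<Rightarrow> nat \<Rightarrow> ((nat \<Rightarrow> complex) \<Rightarrow> 'a) \<Rightarrow> ((nat \<Rightarrow> complex) \<Rightarrow> 'a) set" where
  "hclass X n f = {g. continuous_map (torus n) X g \<and> homotopic_with (\<lambda>_. True) (torus n) X f g}"

definition pi0L :: "'a topology \<Rightarrow> nat \<Rightarrow> ((nat \<Rightarrow> complex) \<Rightarrow> 'a) set set" where
  "pi0L X n = hclass X n ` {f. continuous_map (torus n) X f}"

definition induced :: "'a topology \<Rightarrow> nat \<Rightarrow> nat \<Rightarrow> (nat \<Rightarrow> nat)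
    \<Rightarrow> ((nat \<Rightarrow> complex) \<Rightarrow> 'a) set \<Rightarrow> ((nat \<Rightarrow> complex) \<Rightarrow> 'a) set" where
  "induced X n k \<iota> c = {g. continuous_map (torus n) X g \<and>
      (\<exists>f\<in>c. homotopic_with (\<lambda>_. True) (torus n) X (f \<circ> std_proj k \<iota>) g)}"

definition old :: "'a topology \<Rightarrow> nat \<Rightarrow> ((nat \<Rightarrow> complex) \<Rightarrow> 'a) set \<Rightarrow> bool" where
  "old X n c \<longleftrightarrow> (\<exists>k \<iota> c'. k < n \<and> ord_inj k n \<iota> \<and> c' \<in> pi0L X k \<and> c = induced X n k \<iota> c')"

definition new :: "'a topology \<Rightarrow> nat \<Rightarrow> ((nat \<Rightarrow> complex) \<Rightarrow> 'a) set \<Rightarrow> bool" where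
  "new X n c \<longleftrightarrow> c \<in> pi0L X n \<and> \<not> old X n c"

end

theory Submission
  imports Defs
begin

text \<open>Existence: take k minimal such that \<gamma> is pulled back from \<pi>_0(L^k X) along a
  standard projection. The class it is pulled back from is new, since otherwise composing the
  two projections would give a smaller k.

  Uniqueness: the standard projection T^n \<rightarrow> T^k of \<iota> has a continuous section, which puts 1
  into the coordinates outside the image of \<iota>. Restricting a homotopy f1 \<circ> p1 \<simeq> f2 \<circ> p2
  along the section of p1 shows that f1 is homotopic to a map reading only the coordinates j
  with \<iota>1 j in the image of \<iota>2. As the class of f1 is new, im \<iota>1 \<subseteq> im \<iota>2, and
  symmetrically. An order-preserving injection is determined by its image, and restricting
  along the section once more gives f1 \<simeq> f2.\<close>

lemma topspace_torus: "topspace (torus n) = PiE {1..n} (\<lambda>i. sphere 0 1)"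
  by (simp add: torus_def circle_def)

lemma ord_inj_funcset: "ord_inj k n \<iota> \<Longrightarrow> \<iota> \<in> {1..k} \<rightarrow> {1..n}"
  by (auto simp: ord_inj_def)

lemma ord_inj_inj_on: "ord_inj k n \<iota> \<Longrightarrow> inj_on \<iota> {1..k}"
  by (auto simp: ord_inj_def intro: strict_mono_on_imp_inj_on)

lemma ord_inj_id: "ord_inj n n (restrict id {1..n})"
  by (auto simp: ord_inj_def strict_mono_on_def)

lemma ord_inj_comp:
  assumes "ord_inj m k \<kappa>" "ord_inj k n \<iota>"
  shows "ord_inj m n (restrict (\<iota> \<circ> \<kappa>) {1..m})"
  using assms unfolding ord_inj_def strict_mono_on_def by (auto simp: PiE_def Pi_def)

lemma ord_inj_eq_if_image_eq:
  assumes "ord_inj k1 n \<iota>1" "ord_inj k2 n \<iota>2" "\<iota>1 ` {1..k1} = \<iota>2 ` {1..k2}"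
  shows "k1 = k2" "\<iota>1 = \<iota>2"
proof -
  have "k1 = card (\<iota>1 ` {1..k1})" using card_image[OF ord_inj_inj_on[OF assms(1)]] by simp
  also have "\<dots> = k2" using assms(3) card_image[OF ord_inj_inj_on[OF assms(2)]] by simp
  finally show k: "k1 = k2" .
  have sorted: "sorted_wrt (<) (map \<iota> [1..<Suc k])" if "ord_inj k n \<iota>" for k \<iota>
    using that unfolding ord_inj_def strict_mono_on_def
    by (auto simp: sorted_wrt_iff_nth_less nth_upt simp del: upt_Suc)
  have "map \<iota>1 [1..<Suc k1] = map \<iota>2 [1..<Suc k1]"
    using strict_sorted_equal[OF sorted[OF assms(1)] sorted[OF assms(2)]] assms(3) k
    by (metis atLeastLessThanSuc_atLeastAtMost set_map set_upt)
  then have "\<forall>j\<in>{1..k1}. \<iota>1 j = \<iota>2 j" by (simp add: map_eq_conv del: upt_Suc)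
  moreover have "\<iota>1 \<in> extensional {1..k1}" "\<iota>2 \<in> extensional {1..k1}"
    using assms k by (auto simp: ord_inj_def PiE_def)
  ultimately show "\<iota>1 = \<iota>2" using extensionalityI by blast
qed

lemma ord_inj_enumerate:
  assumes "S \<subseteq> {1..n}"
  obtains \<kappa> where "ord_inj (card S) n \<kappa>" "\<kappa> ` {1..card S} = S"
proof -
  define xs where "xs = sorted_list_of_set S"
  have xs: "sorted_wrt (<) xs" "set xs = S" "length xs = card S"
    using finite_subset[OF assms] by (auto simp: xs_def)
  define \<kappa> where "\<kappa> = restrict (\<lambda>i. xs ! (i - 1)) {1..card S}"
  have "\<kappa> ` {1..card S} = \<kappa> ` Suc ` {..<card S}"
    by (simp add: atLeastLessThanSuc_atLeastAtMost lessThan_atLeast0)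
  also have "\<dots> = (\<lambda>i. xs ! i) ` {..<card S}"
    unfolding image_image by (rule image_cong) (auto simp: \<kappa>_def)
  also have "\<dots> = S" using xs by (auto simp: set_conv_nth)
  finally have image: "\<kappa> ` {1..card S} = S" .
  have "ord_inj (card S) n \<kappa>"
    unfolding ord_inj_def
  proof
    show "\<kappa> \<in> {1..card S} \<rightarrow>\<^sub>E {1..n}" using image assms by (auto simp: \<kappa>_def)
    show "strict_mono_on {1..card S} \<kappa>"
      unfolding strict_mono_on_def \<kappa>_def using xs by (auto simp: sorted_wrt_iff_nth_less)
  qed
  with image show thesis using that by blast
qed

definition torus_reindex :: "nat \<Rightarrow> nat set \<Rightarrow> (nat \<Rightarrow> nat) \<Rightarrow> (nat \<Rightarrow> complex) \<Rightarrow> (nat \<Rightarrow> complex)"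
  where "torus_reindex k D \<phi> t = restrict (\<lambda>i. if i \<in> D then t (\<phi> i) else 1) {1..k}"

lemma continuous_map_torus_reindex:
  assumes "\<And>i. i \<in> D \<Longrightarrow> i \<in> {1..k} \<Longrightarrow> \<phi> i \<in> {1..m}"
  shows "continuous_map (torus m) (torus k) (torus_reindex k D \<phi>)"
  unfolding torus_def
proof (subst continuous_map_componentwise, intro conjI ballI)
  show "torus_reindex k D \<phi> ` topspace (product_topology (\<lambda>i. circle) {1..m}) \<subseteq> extensional {1..k}"
    by (auto simp: torus_reindex_def)
  fix i assume i: "i \<in> {1..k}"
  show "continuous_map (product_topology (\<lambda>i. circle) {1..m}) circle (\<lambda>t. torus_reindex k D \<phi> t i)"
  proof (cases "i \<in> D")
    case True
    then have "continuous_map (product_topology (\<lambda>i. circle) {1..m}) circle (\<lambda>t. t (\<phi> i))"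
      using assms i by (intro continuous_map_product_projection) auto
    then show ?thesis using i True by (simp add: torus_reindex_def)
  next
    case False
    then show ?thesis using i by (simp add: torus_reindex_def circle_def)
  qed
qed

lemma continuous_map_std_proj:
  assumes "\<iota> \<in> {1..k} \<rightarrow> {1..n}"
  shows "continuous_map (torus n) (torus k) (std_proj k \<iota>)"
proof -
  have "std_proj k \<iota> = torus_reindex k UNIV \<iota>"
    by (simp add: fun_eq_iff std_proj_def torus_reindex_def)
  then show ?thesis
    by (metis assms continuous_map_torus_reindex funcset_mem)
qed

lemma std_proj_std_proj:
  assumes "\<kappa> \<in> {1..m} \<rightarrow> {1..k}"
  shows "std_proj m \<kappa> (std_proj k \<iota> t) = std_proj m (restrict (\<iota> \<circ> \<kappa>) {1..m}) t"
  using assms by (auto simp: std_proj_def fun_eq_iff)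

definition torus_incl :: "nat \<Rightarrow> nat \<Rightarrow> (nat \<Rightarrow> nat) \<Rightarrow> (nat \<Rightarrow> complex) \<Rightarrow> (nat \<Rightarrow> complex)"
  where "torus_incl n k \<iota> = torus_reindex n (\<iota> ` {1..k}) (the_inv_into {1..k} \<iota>)"

lemma continuous_map_torus_incl:
  assumes "ord_inj k n \<iota>"
  shows "continuous_map (torus k) (torus n) (torus_incl n k \<iota>)"
  unfolding torus_incl_def
  using the_inv_into_into[OF ord_inj_inj_on[OF assms]] by (intro continuous_map_torus_reindex) blast

lemma torus_incl_apply:
  assumes "ord_inj k n \<iota>" "j \<in> {1..k}"
  shows "torus_incl n k \<iota> t (\<iota> j) = t j"
  using assms ord_inj_funcset[OF assms(1)] the_inv_into_f_f[OF ord_inj_inj_on[OF assms(1)]]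
  by (auto simp: torus_incl_def torus_reindex_def)

lemma torus_incl_apply_outside_image:
  assumes "i \<in> {1..n}" "i \<notin> \<iota> ` {1..k}"
  shows "torus_incl n k \<iota> t i = 1"
  using assms by (simp add: torus_incl_def torus_reindex_def)

lemma std_proj_torus_incl:
  assumes "ord_inj k n \<iota>" "t \<in> topspace (torus k)"
  shows "std_proj k \<iota> (torus_incl n k \<iota> t) = t"
proof (rule extensionalityI)
  show "t \<in> extensional {1..k}" using assms(2) by (simp add: topspace_torus PiE_def)
  show "\<And>j. j \<in> {1..k} \<Longrightarrow> std_proj k \<iota> (torus_incl n k \<iota> t) j = t j"
    using assms(1) by (simp add: std_proj_def torus_incl_apply)
qed (simp add: std_proj_def)

text \<open>After the section of \<iota>1, the projection of \<iota>2 only reads the coordinates j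
  with \<iota>1 j in the image of \<iota>2, i.e. those enumerated by \<kappa>.\<close>
lemma std_proj_torus_incl_factor:
  assumes \<iota>1: "ord_inj k1 n \<iota>1" and \<iota>2: "ord_inj k2 n \<iota>2" and \<kappa>: "ord_inj m k1 \<kappa>"
    and image: "\<kappa> ` {1..m} = {j\<in>{1..k1}. \<iota>1 j \<in> \<iota>2 ` {1..k2}}"
  shows "std_proj k2 \<iota>2 (torus_incl n k1 \<iota>1 (torus_incl k1 m \<kappa> (std_proj m \<kappa> t)))
    = std_proj k2 \<iota>2 (torus_incl n k1 \<iota>1 t)"
proof -
  have agree: "torus_incl k1 m \<kappa> (std_proj m \<kappa> t) j = t j"
    if "j \<in> {1..k1}" "\<iota>1 j \<in> \<iota>2 ` {1..k2}" for j
  proof -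
    have "j \<in> \<kappa> ` {1..m}" using that unfolding image by simp
    then obtain l where "l \<in> {1..m}" "j = \<kappa> l" by blast
    then show ?thesis using torus_incl_apply[OF \<kappa>] by (simp add: std_proj_def)
  qed
  have "torus_incl n k1 \<iota>1 (torus_incl k1 m \<kappa> (std_proj m \<kappa> t)) (\<iota>2 i) = torus_incl n k1 \<iota>1 t (\<iota>2 i)"
    if i: "i \<in> {1..k2}" for i
  proof (cases "\<iota>2 i \<in> \<iota>1 ` {1..k1}")
    case True
    then obtain j where j: "j \<in> {1..k1}" "\<iota>2 i = \<iota>1 j" by blast
    have "\<iota>1 j \<in> \<iota>2 ` {1..k2}" using i j(2) by (metis imageI)
    with j(1) have "torus_incl k1 m \<kappa> (std_proj m \<kappa> t) j = t j" by (rule agree)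
    then show ?thesis using j torus_incl_apply[OF \<iota>1] by metis
  next
    case False
    have "\<iota>2 i \<in> {1..n}" using ord_inj_funcset[OF \<iota>2] i by blast
    then show ?thesis using torus_incl_apply_outside_image False by metis
  qed
  then show ?thesis unfolding std_proj_def by (rule restrict_ext)
qed

lemma hclass_eq_iff:
  assumes "continuous_map (torus n) X f" "continuous_map (torus n) X g"
  shows "hclass X n f = hclass X n g \<longleftrightarrow> homotopic_with (\<lambda>_. True) (torus n) X f g"
proof
  assume "hclass X n f = hclass X n g"
  then have "g \<in> hclass X n f" using assms by (simp add: hclass_def)
  then show "homotopic_with (\<lambda>_. True) (torus n) X f g" by (simp add: hclass_def)
next
  assume h: "homotopic_with (\<lambda>_. True) (torus n) X f g"
  show "hclass X n f = hclass X n g"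
    unfolding hclass_def
    using homotopic_with_trans[OF h] homotopic_with_trans[OF homotopic_with_symD[OF h]] by auto
qed

lemma induced_hclass:
  assumes f: "continuous_map (torus k) X f" and \<iota>: "\<iota> \<in> {1..k} \<rightarrow> {1..n}"
  shows "induced X n k \<iota> (hclass X k f) = hclass X n (f \<circ> std_proj k \<iota>)"
  unfolding induced_def hclass_def
proof (intro set_eqI iffI; clarsimp)
  fix g f' assume f': "homotopic_with (\<lambda>_. True) (torus k) X f f'"
    and h: "homotopic_with (\<lambda>_. True) (torus n) X (f' \<circ> std_proj k \<iota>) g"
  have "homotopic_with (\<lambda>_. True) (torus n) X (f \<circ> std_proj k \<iota>) (f' \<circ> std_proj k \<iota>)"
    using continuous_map_std_proj[OF \<iota>] by (intro homotopic_with_compose_continuous_map_right[OF f']) auto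
  then show "homotopic_with (\<lambda>_. True) (torus n) X (f \<circ> std_proj k \<iota>) g"
    using h homotopic_with_trans by blast
qed (use f in auto)

lemma induced_induced:
  assumes c: "c \<in> pi0L X m" and \<kappa>: "\<kappa> \<in> {1..m} \<rightarrow> {1..k}" and \<iota>: "\<iota> \<in> {1..k} \<rightarrow> {1..n}"
  shows "induced X n k \<iota> (induced X k m \<kappa> c) = induced X n m (restrict (\<iota> \<circ> \<kappa>) {1..m}) c"
proof -
  obtain f where f: "continuous_map (torus m) X f" "c = hclass X m f"
    using c by (auto simp: pi0L_def)
  have "continuous_map (torus k) X (f \<circ> std_proj m \<kappa>)"
    using continuous_map_std_proj[OF \<kappa>] f(1) by (rule continuous_map_compose)
  moreover have "f \<circ> std_proj m \<kappa> \<circ> std_proj k \<iota> = f \<circ> std_proj m (restrict (\<iota> \<circ> \<kappa>) {1..m})"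
    using \<kappa> by (simp add: fun_eq_iff std_proj_std_proj)
  moreover have "restrict (\<iota> \<circ> \<kappa>) {1..m} \<in> {1..m} \<rightarrow> {1..n}" using \<kappa> \<iota> by auto
  ultimately show ?thesis using f \<kappa> \<iota> by (simp add: induced_hclass)
qed

lemma induced_id:
  assumes c: "c \<in> pi0L X n"
  shows "induced X n n (restrict id {1..n}) c = c"
proof -
  obtain f where f: "continuous_map (torus n) X f" "c = hclass X n f"
    using c by (auto simp: pi0L_def)
  let ?p = "std_proj n (restrict id {1..n})"
  have p: "restrict id {1..n} \<in> {1..n} \<rightarrow> {1..n}" by auto
  have fp: "continuous_map (torus n) X (f \<circ> ?p)"
    using continuous_map_std_proj[OF p] f(1) by (rule continuous_map_compose)
  have "?p t = t" if "t \<in> topspace (torus n)" for t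
    using that by (auto simp: topspace_torus std_proj_def PiE_def extensional_def)
  then have "homotopic_with (\<lambda>_. True) (torus n) X (f \<circ> ?p) f"
    using fp by (intro homotopic_with_equal) auto
  then have "hclass X n (f \<circ> ?p) = hclass X n f" using hclass_eq_iff[OF fp f(1)] by simp
  then show ?thesis using induced_hclass[OF f(1) p] f(2) by simp
qed

lemma homotopic_with_torus_incl:
  assumes \<iota>: "ord_inj k n \<iota>" and h: "homotopic_with (\<lambda>_. True) (torus n) X (f \<circ> std_proj k \<iota>) g"
  shows "homotopic_with (\<lambda>_. True) (torus k) X f (g \<circ> torus_incl n k \<iota>)"
proof -
  have "homotopic_with (\<lambda>_. True) (torus k) X (f \<circ> std_proj k \<iota> \<circ> torus_incl n k \<iota>) (g \<circ> torus_incl n k \<iota>)"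
    using continuous_map_torus_incl[OF \<iota>] by (intro homotopic_with_compose_continuous_map_right[OF h]) auto
  then show ?thesis
    by (rule homotopic_with_eq) (auto simp: std_proj_torus_incl[OF \<iota>])
qed

lemma image_subset_if_new:
  assumes \<iota>1: "ord_inj k1 n \<iota>1" and \<iota>2: "ord_inj k2 n \<iota>2"
    and f1: "continuous_map (torus k1) X f1" and f2: "continuous_map (torus k2) X f2"
    and h: "homotopic_with (\<lambda>_. True) (torus n) X (f1 \<circ> std_proj k1 \<iota>1) (f2 \<circ> std_proj k2 \<iota>2)"
    and new: "new X k1 (hclass X k1 f1)"
  shows "\<iota>1 ` {1..k1} \<subseteq> \<iota>2 ` {1..k2}"
proof -
  define S where "S = {j\<in>{1..k1}. \<iota>1 j \<in> \<iota>2 ` {1..k2}}"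
  define m where "m = card S"
  obtain \<kappa> where \<kappa>: "ord_inj m k1 \<kappa>" "\<kappa> ` {1..m} = S"
    using ord_inj_enumerate[of S k1] unfolding m_def S_def by blast
  define g where "g = f2 \<circ> std_proj k2 \<iota>2 \<circ> torus_incl n k1 \<iota>1 \<circ> torus_incl k1 m \<kappa>"
  have g: "continuous_map (torus m) X g"
    unfolding g_def using f2 continuous_map_std_proj[OF ord_inj_funcset[OF \<iota>2]]
      continuous_map_torus_incl[OF \<iota>1] continuous_map_torus_incl[OF \<kappa>(1)]
    by (auto intro!: continuous_map_compose)
  have gp: "continuous_map (torus k1) X (g \<circ> std_proj m \<kappa>)"
    using continuous_map_std_proj[OF ord_inj_funcset[OF \<kappa>(1)]] g by (rule continuous_map_compose)
  have "homotopic_with (\<lambda>_. True) (torus k1) X f1 (f2 \<circ> std_proj k2 \<iota>2 \<circ> torus_incl n k1 \<iota>1)"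
    using homotopic_with_torus_incl[OF \<iota>1 h] by (simp add: comp_assoc)
  then have "homotopic_with (\<lambda>_. True) (torus k1) X f1 (g \<circ> std_proj m \<kappa>)"
    by (rule homotopic_with_eq)
      (simp_all add: g_def std_proj_torus_incl_factor[OF \<iota>1 \<iota>2 \<kappa>(1) \<kappa>(2)[unfolded S_def]])
  then have "hclass X k1 f1 = hclass X k1 (g \<circ> std_proj m \<kappa>)" using hclass_eq_iff[OF f1 gp] by simp
  also have "\<dots> = induced X k1 m \<kappa> (hclass X m g)"
    using induced_hclass[OF g ord_inj_funcset[OF \<kappa>(1)]] by simp
  finally have "hclass X k1 f1 = induced X k1 m \<kappa> (hclass X m g)" .
  moreover have "hclass X m g \<in> pi0L X m" using g by (simp add: pi0L_def)
  ultimately have "\<not> m < k1" using new \<kappa>(1) by (auto simp: new_def old_def)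
  moreover have S: "S \<subseteq> {1..k1}" by (auto simp: S_def)
  ultimately have "card S = card {1..k1}"
    using card_mono[OF finite_atLeastAtMost S] by (simp add: m_def)
  then have "S = {1..k1}" using card_subset_eq[OF finite_atLeastAtMost S] by blast
  then show ?thesis by (auto simp: S_def)
qed

lemma new_decomposition_unique:
  assumes \<iota>1: "ord_inj k1 n \<iota>1" and new1: "new X k1 \<gamma>1"
    and \<iota>2: "ord_inj k2 n \<iota>2" and new2: "new X k2 \<gamma>2"
    and eq: "induced X n k1 \<iota>1 \<gamma>1 = induced X n k2 \<iota>2 \<gamma>2"
  shows "(k1, \<iota>1, \<gamma>1) = (k2, \<iota>2, \<gamma>2)"
proof -
  obtain f1 where f1: "continuous_map (torus k1) X f1" "\<gamma>1 = hclass X k1 f1"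
    using new1 by (auto simp: new_def pi0L_def)
  obtain f2 where f2: "continuous_map (torus k2) X f2" "\<gamma>2 = hclass X k2 f2"
    using new2 by (auto simp: new_def pi0L_def)
  have c1: "continuous_map (torus n) X (f1 \<circ> std_proj k1 \<iota>1)"
    using continuous_map_std_proj[OF ord_inj_funcset[OF \<iota>1]] f1(1) by (rule continuous_map_compose)
  have c2: "continuous_map (torus n) X (f2 \<circ> std_proj k2 \<iota>2)"
    using continuous_map_std_proj[OF ord_inj_funcset[OF \<iota>2]] f2(1) by (rule continuous_map_compose)
  have "hclass X n (f1 \<circ> std_proj k1 \<iota>1) = hclass X n (f2 \<circ> std_proj k2 \<iota>2)"
    using eq f1(2) f2(2) induced_hclass[OF f1(1) ord_inj_funcset[OF \<iota>1]]
      induced_hclass[OF f2(1) ord_inj_funcset[OF \<iota>2]] by simp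
  then have h: "homotopic_with (\<lambda>_. True) (torus n) X (f1 \<circ> std_proj k1 \<iota>1) (f2 \<circ> std_proj k2 \<iota>2)"
    using hclass_eq_iff[OF c1 c2] by simp
  have "\<iota>1 ` {1..k1} = \<iota>2 ` {1..k2}"
    using image_subset_if_new[OF \<iota>1 \<iota>2 f1(1) f2(1) h] image_subset_if_new[OF \<iota>2 \<iota>1 f2(1) f1(1)]
      homotopic_with_symD[OF h] new1 new2 f1(2) f2(2) by blast
  then have k: "k1 = k2" and \<iota>: "\<iota>1 = \<iota>2" using ord_inj_eq_if_image_eq[OF \<iota>1 \<iota>2] by auto
  have "homotopic_with (\<lambda>_. True) (torus k1) X f1 (f2 \<circ> std_proj k1 \<iota>1 \<circ> torus_incl n k1 \<iota>1)"
    using homotopic_with_torus_incl[OF \<iota>1 h] k \<iota> by simp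
  then have "homotopic_with (\<lambda>_. True) (torus k1) X f1 f2"
    by (rule homotopic_with_eq) (auto simp: std_proj_torus_incl[OF \<iota>1])
  then have "\<gamma>1 = \<gamma>2" using f1 f2 k by (simp add: hclass_eq_iff)
  with k \<iota> show ?thesis by simp
qed

lemma new_decomposition_exists:
  assumes \<gamma>: "\<gamma> \<in> pi0L X n"
  obtains k \<iota> \<gamma>' where "ord_inj k n \<iota>" "new X k \<gamma>'" "\<gamma> = induced X n k \<iota> \<gamma>'"
proof -
  define pulled_back where
    "pulled_back k \<longleftrightarrow> (\<exists>\<iota> \<gamma>'. ord_inj k n \<iota> \<and> \<gamma>' \<in> pi0L X k \<and> \<gamma> = induced X n k \<iota> \<gamma>')" for k
  have "pulled_back n"
    unfolding pulled_back_def using ord_inj_id induced_id[OF \<gamma>] \<gamma> by metis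
  define k where "k = (LEAST k. pulled_back k)"
  obtain \<iota> \<gamma>' where \<iota>: "ord_inj k n \<iota>" and \<gamma>': "\<gamma>' \<in> pi0L X k" and eq: "\<gamma> = induced X n k \<iota> \<gamma>'"
    using LeastI[of pulled_back, OF \<open>pulled_back n\<close>] unfolding pulled_back_def k_def by blast
  have "\<not> old X k \<gamma>'"
  proof
    assume "old X k \<gamma>'"
    then obtain k' \<kappa> c where "k' < k" and \<kappa>: "ord_inj k' k \<kappa>" and c: "c \<in> pi0L X k'"
      and "\<gamma>' = induced X k k' \<kappa> c"
      unfolding old_def by blast
    then have "\<gamma> = induced X n k' (restrict (\<iota> \<circ> \<kappa>) {1..k'}) c"
      using eq induced_induced[OF c ord_inj_funcset[OF \<kappa>] ord_inj_funcset[OF \<iota>]] by simp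
    then have "pulled_back k'" unfolding pulled_back_def using ord_inj_comp[OF \<kappa> \<iota>] c by blast
    with \<open>k' < k\<close> show False unfolding k_def using not_less_Least by blast
  qed
  with \<iota> \<gamma>' eq that show thesis by (auto simp: new_def)
qed

theorem proposition2p5:
  fixes X :: "'a topology" and n :: nat
  assumes "\<gamma> \<in> pi0L X n"
  shows "\<exists>!(k, \<iota>, \<gamma>'). ord_inj k n \<iota> \<and> new X k \<gamma>' \<and> \<gamma> = induced X n k \<iota> \<gamma>'"
proof -
  obtain k \<iota> \<gamma>' where "ord_inj k n \<iota>" "new X k \<gamma>'" "\<gamma> = induced X n k \<iota> \<gamma>'"
    using new_decomposition_exists[OF assms] .
  then show ?thesis
    by (intro ex1I[of _ "(k, \<iota>, \<gamma>')"]) (auto dest: new_decomposition_unique)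
qed

end
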